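(* Let $P>0$, $\zeta\in\mathbb{R}$, and let $q=(q_1,q_2)^\intercal:\mathbb{R}\to\mathbb{C}^2$ be smooth and $P$-periodic. Define $\alpha=-i\zeta$, $\beta=q$, $\gamma=-\overline q$, $\rho=i\zeta I_2$, and $$A=-2i\zeta^2+iq^\intercal\overline q,\quad B=2\zeta q+iq_x,\quad C=-2\zeta\overline q+i\overline q_x,\quad D=2i\zeta^2I_2-i\overline q\,q^\intercal,$$ $X=\begin{pmatrix}\alpha&\beta^\intercal\\ \gamma&\rho\end{pmatrix}$, $T=\begin{pmatrix}A&B^\intercal\\ C&D\end{pmatrix}$ (both $3\times3$), and assume $T_x=XT-TX$ for all $x$. Then $T(x)$ is skew-Hermitian, so every eigenvalue $\Omega$ of $T$ is purely imaginary; and if $\Omega$ is an $x$-independent eigenvalue of $T$ with $\det(D(x)-\Omega I_2)\neq0$ for all $x$, then $$\mathrm{Re}\int_0^P\beta^\intercal(D-\Omega I_2)^{-1}C\,dx=0 .$$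
   Context: This is the Lax pair $v_x=Xv$, $v_t=Tv$ of the Manakov system (two-component vector NLS) $iq_{j,t}+q_{j,xx}+2(|q_1|^2+|q_2|^2)q_j=0$, $j=1,2$, for a stationary potential; the hypothesis $T_x=[X,T]$ is the compatibility condition. $I_2$ is the $2\times2$ identity, overline is complex conjugation, ${}^\intercal$ is transpose. The displayed vanishing is the condition that the eigenfunction $v=e^{\Omega t}y_1(x)\,(a,-(D-\Omega I_2)^{-1}Ca)^\intercal$, $y_1'=(\alpha-\beta^\intercal(D-\Omega I_2)^{-1}C)y_1$, is bounded in $x$. *)

theory Defs
  imports "HOL-Analysis.Analysis"
begin

definition smooth_fun :: "(real \<Rightarrow> 'a::real_normed_vector) \<Rightarrow> bool" where
  "smooth_fun f \<longleftrightarrow> (\<exists>d :: nat \<Rightarrow> real \<Rightarrow> 'a. d 0 = f \<and>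
      (\<forall>n x. (d n has_vector_derivative d (Suc n) x) (at x)))"

definition vconj :: "complex ^ 'n \<Rightarrow> complex ^ 'n" where
  "vconj v = (\<chi> i. cnj (v $ i))"

definition adjoint_mat :: "complex ^ 'n ^ 'm \<Rightarrow> complex ^ 'm ^ 'n" where
  "adjoint_mat M = (\<chi> i j. cnj (M $ j $ i))"

definition skew_hermitian :: "complex ^ 'n ^ 'n \<Rightarrow> bool" where
  "skew_hermitian M \<longleftrightarrow> adjoint_mat M = - M"

definition is_eigenvalue :: "complex ^ 'n ^ 'n \<Rightarrow> complex \<Rightarrow> bool" where
  "is_eigenvalue M \<Omega> \<longleftrightarrow> (\<exists>v. v \<noteq> 0 \<and> M *v v = \<Omega> *s v)"

text \<open>Index embedding of the lower 2x2 block into the 3x3 matrix: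
  3x3 indices 1,2,3 (of type 3); index 1 is the scalar block, indices 2,3 correspond
  to indices 1,2 of type 2.\<close>
definition sub3 :: "3 \<Rightarrow> 2" where
  "sub3 j = (if j = 2 then 1 else 2)"

definition blockmat :: "complex \<Rightarrow> complex ^ 2 \<Rightarrow> complex ^ 2 \<Rightarrow> complex ^ 2 ^ 2 \<Rightarrow> complex ^ 3 ^ 3" where
  "blockmat a b c d = (\<chi> i j. if i = 1 then (if j = 1 then a else b $ sub3 j)
                               else (if j = 1 then c $ sub3 i else d $ sub3 i $ sub3 j))"

definition outer :: "complex ^ 'n \<Rightarrow> complex ^ 'm \<Rightarrow> complex ^ 'm ^ 'n" where
  "outer u v = (\<chi> i j. u $ i * v $ j)"

end

theory Submission
  imports Defs
begin

text \<open>
  Differentiating the eigenvalue equation \<open>T U = \<Omega> U\<close> along the Lax equation \<open>T' = [X, T]\<close>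
  shows that \<open>U' - X U\<close> is again an \<open>\<Omega>\<close>-eigenvector of \<open>T\<close>. Where \<open>D - \<Omega>\<close> is invertible the
  eigenspace is spanned by \<open>U = (1, -(D - \<Omega>)\<^sup>-\<^sup>1 C)\<close>, so \<open>U' = X U + c U\<close> with the scalar
  \<open>c = -(X U)\<^sub>1 = i\<zeta> + \<beta>\<^sup>T (D - \<Omega>)\<^sup>-\<^sup>1 C\<close>. Since \<open>X\<close> is skew-Hermitian, \<open>log |U|\<^sup>2\<close> has
  derivative \<open>2 Re c\<close>, and periodicity of \<open>U\<close> forces \<open>\<integral>\<^sub>0\<^sup>P Re c = 0\<close>.
\<close>

lemma inner_vec_complex: "inner v w = Re (\<Sum>i\<in>UNIV. cnj (v $ i) * w $ i)"
  for v w :: "complex ^ 'n"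
  by (simp add: inner_vec_def inner_complex_def)

lemma inner_mulv_skew_hermitian:
  fixes M :: "complex ^ 'n ^ 'n"
  assumes "skew_hermitian M"
  shows "inner v (M *v v) = 0"
proof -
  have M: "cnj (M $ j $ i) = - M $ i $ j" for i j
    using assms by (simp add: skew_hermitian_def adjoint_mat_def vec_eq_iff)
  define s where "s = (\<Sum>i\<in>UNIV. cnj (v $ i) * (M *v v) $ i)"
  have "cnj s = (\<Sum>i\<in>UNIV. \<Sum>j\<in>UNIV. - (cnj (v $ j) * M $ j $ i * v $ i))"
    by (simp add: s_def matrix_vector_mult_def sum_distrib_left M mult.commute mult.left_commute)
  also have "\<dots> = - s"
    by (subst sum.swap) (simp add: s_def matrix_vector_mult_def sum_distrib_left sum_negf mult.assoc)
  finally have "Re s = - Re s"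
    by (metis cnj.sel(1) uminus_complex.sel(1))
  then have "Re s = 0" by simp
  then show ?thesis by (simp add: inner_vec_complex s_def)
qed

lemma inner_vector_scalar_mult_self:
  fixes v :: "complex ^ 'n"
  shows "inner v (c *s v) = Re c * (norm v)\<^sup>2"
  by (simp add: power2_norm_eq_inner inner_vec_def inner_complex_def sum_distrib_left algebra_simps)

lemma skew_hermitian_eigenvalue_Re:
  fixes M :: "complex ^ 'n ^ 'n"
  assumes "skew_hermitian M" and "is_eigenvalue M \<Omega>"
  shows "Re \<Omega> = 0"
proof -
  obtain v where "v \<noteq> 0" and "M *v v = \<Omega> *s v"
    using assms(2) by (auto simp: is_eigenvalue_def)
  then have "Re \<Omega> * (norm v)\<^sup>2 = 0"
    using inner_mulv_skew_hermitian[OF assms(1), of v] by (simp add: inner_vector_scalar_mult_self)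
  with \<open>v \<noteq> 0\<close> show ?thesis by simp
qed

lemma matrix_inv_mulv_eqI:
  fixes m :: "'a::field ^ 'n ^ 'n"
  assumes "det m \<noteq> 0" and "m *v z = y"
  shows "matrix_inv m *v y = z"
proof -
  have "invertible m" using assms(1) by (simp add: invertible_det_nz)
  then have "matrix_inv m ** m = mat 1"
    unfolding invertible_def matrix_inv_def by (rule someI2_ex) blast
  then show ?thesis using assms(2) by (metis matrix_vector_mul_assoc matrix_vector_mul_lid)
qed

lemma matrix_inv_mulv_2:
  fixes m :: "'a::field ^ 2 ^ 2"
  assumes "det m \<noteq> 0"
  shows "matrix_inv m *v c = vector [(m$2$2 * c$1 - m$1$2 * c$2) / det m, (m$1$1 * c$2 - m$2$1 * c$1) / det m]"
  using assms
proof (rule matrix_inv_mulv_eqI)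
  show "m *v vector [(m$2$2 * c$1 - m$1$2 * c$2) / det m, (m$1$1 * c$2 - m$2$1 * c$1) / det m] = c"
    using assms unfolding vec_eq_iff forall_2
    by (simp add: matrix_vector_mult_def sum_2 field_simps) (simp add: det_2 algebra_simps)
qed

lemma blockmat_mulv:
  "(blockmat a b c d *v v) $ i = (if i = 1 then a * v$1 + b$1 * v$2 + b$2 * v$3
      else c $ sub3 i * v$1 + d$(sub3 i)$1 * v$2 + d$(sub3 i)$2 * v$3)"
  by (simp add: matrix_vector_mult_def sum_3 blockmat_def sub3_def)

lemma skew_hermitian_blockmat:
  assumes "cnj a = - a" and "c = - vconj b" and "skew_hermitian d"
  shows "skew_hermitian (blockmat a b c d)"
proof -
  have "cnj (d $ j $ i) = - d $ i $ j" for i j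
    using assms(3) by (simp add: skew_hermitian_def adjoint_mat_def vec_eq_iff)
  then show ?thesis
    using assms(1,2) unfolding skew_hermitian_def vec_eq_iff adjoint_mat_def forall_3
    by (simp add: blockmat_def sub3_def vconj_def)
qed

text \<open>The eigenvector \<open>(a, -(D - \<Omega>)\<^sup>-\<^sup>1 C a)\<close> of the paper, normalized by \<open>a = 1\<close>.\<close>

definition block_eigenvector :: "complex ^ 2 ^ 2 \<Rightarrow> complex ^ 2 \<Rightarrow> complex \<Rightarrow> complex ^ 3" where
  "block_eigenvector d c \<Omega> = (\<chi> i. if i = 1 then 1 else - (matrix_inv (d - mat \<Omega>) *v c) $ sub3 i)"

lemma block_eigenvector_1 [simp]: "block_eigenvector d c \<Omega> $ 1 = 1"
  by (simp add: block_eigenvector_def)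

lemma blockmat_eigenvector_eq:
  assumes "det (d - mat \<Omega>) \<noteq> 0" and "blockmat a b c d *v v = \<Omega> *s v"
  shows "v = v $ 1 *s block_eigenvector d c \<Omega>"
proof -
  define w where "w = (\<chi> j::2. if j = 1 then v $ 2 else v $ 3)"
  have "(blockmat a b c d *v v) $ 2 = \<Omega> * v $ 2" "(blockmat a b c d *v v) $ 3 = \<Omega> * v $ 3"
    using assms(2) by simp_all
  then have "(d - mat \<Omega>) *v w = (- v $ 1) *s c"
    unfolding vec_eq_iff forall_2 blockmat_mulv
    by (simp add: matrix_vector_mult_def sum_2 w_def mat_def sub3_def algebra_simps)
  then have "w = (- v $ 1) *s (matrix_inv (d - mat \<Omega>) *v c)"
    using matrix_inv_mulv_eqI[OF assms(1)] by (metis vector_scalar_commute)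
  then show ?thesis
    by (simp add: vec_eq_iff forall_2 forall_3 w_def block_eigenvector_def sub3_def)
qed

lemma blockmat_mulv_block_eigenvector:
  assumes "is_eigenvalue (blockmat a b c d) \<Omega>" and "det (d - mat \<Omega>) \<noteq> 0"
  shows "blockmat a b c d *v block_eigenvector d c \<Omega> = \<Omega> *s block_eigenvector d c \<Omega>"
proof -
  obtain v where "v \<noteq> 0" and v: "blockmat a b c d *v v = \<Omega> *s v"
    using assms(1) by (auto simp: is_eigenvalue_def)
  moreover have v_eq: "v = v $ 1 *s block_eigenvector d c \<Omega>"
    using blockmat_eigenvector_eq[OF assms(2) v] .
  ultimately have "v $ 1 \<noteq> 0" by (metis vector_smult_lzero)
  moreover have "v $ 1 *s (blockmat a b c d *v block_eigenvector d c \<Omega>)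
      = v $ 1 *s (\<Omega> *s block_eigenvector d c \<Omega>)"
    using v v_eq by (metis vector_scalar_commute vector_smult_assoc mult.commute)
  ultimately show ?thesis by (simp add: vec_eq_iff)
qed

lemma blockmat_mulv_block_eigenvector_1:
  "(blockmat a b c' d' *v block_eigenvector d c \<Omega>) $ 1
    = a - (\<Sum>j\<in>UNIV. b $ j * (matrix_inv (d - mat \<Omega>) *v c) $ j)"
  by (simp add: blockmat_mulv block_eigenvector_def sub3_def sum_2)

section \<open>Derivatives of vector- and matrix-valued functions\<close>

lemma has_vector_derivative_componentwise:
  fixes f :: "real \<Rightarrow> 'a::euclidean_space ^ 'n"
  shows "(f has_vector_derivative f') (at x within S)
    \<longleftrightarrow> (\<forall>i. ((\<lambda>y. f y $ i) has_vector_derivative f' $ i) (at x within S))"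
proof
  assume "(f has_vector_derivative f') (at x within S)"
  then show "\<forall>i. ((\<lambda>y. f y $ i) has_vector_derivative f' $ i) (at x within S)"
    by (auto intro: bounded_linear.has_vector_derivative[OF bounded_linear_vec_nth])
next
  assume f: "\<forall>i. ((\<lambda>y. f y $ i) has_vector_derivative f' $ i) (at x within S)"
  have "((\<lambda>y. f y $ i \<bullet> u) has_derivative (\<lambda>h. (h *\<^sub>R f' $ i) \<bullet> u)) (at x within S)" for i u
    by (rule bounded_linear.has_derivative[OF bounded_linear_inner_left])
       (use f in \<open>simp add: has_vector_derivative_def\<close>)
  then show "(f has_vector_derivative f') (at x within S)"
    unfolding has_vector_derivative_def has_derivative_componentwise_within[of f]
    by (auto simp: Basis_vec_def inner_axis)
qed

lemma differentiable_componentwise: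
  fixes f :: "real \<Rightarrow> 'a::euclidean_space ^ 'n"
  shows "f differentiable (at x within S) \<longleftrightarrow> (\<forall>i. (\<lambda>y. f y $ i) differentiable (at x within S))"
proof
  assume "f differentiable (at x within S)"
  then show "\<forall>i. (\<lambda>y. f y $ i) differentiable (at x within S)"
    by (metis differentiableI_vector has_vector_derivative_componentwise vector_derivative_works)
next
  assume "\<forall>i. (\<lambda>y. f y $ i) differentiable (at x within S)"
  then have "(f has_vector_derivative (\<chi> i. vector_derivative (\<lambda>y. f y $ i) (at x within S))) (at x within S)"
    by (simp add: has_vector_derivative_componentwise vector_derivative_works)
  then show "f differentiable (at x within S)"
    by (rule differentiableI_vector)
qed

lemma has_vector_derivative_matrix_vector_mult:
  fixes T :: "real \<Rightarrow> 'a::{real_normed_field, euclidean_space} ^ 'n ^ 'm"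
  assumes "(T has_vector_derivative T') (at x within S)" and "(U has_vector_derivative U') (at x within S)"
  shows "((\<lambda>y. T y *v U y) has_vector_derivative T' *v U x + T x *v U') (at x within S)"
proof -
  have "((\<lambda>y. T y $ i $ j) has_vector_derivative T' $ i $ j) (at x within S)" for i j
    using assms(1) by (simp add: has_vector_derivative_componentwise)
  moreover have "((\<lambda>y. U y $ j) has_vector_derivative U' $ j) (at x within S)" for j
    using assms(2) by (simp add: has_vector_derivative_componentwise)
  ultimately show ?thesis
    unfolding has_vector_derivative_componentwise
    by (auto simp: matrix_vector_mult_def sum.distrib intro!: derivative_eq_intros)
qed

lemma differentiable_matrix_inv_mulv_2:
  fixes M :: "real \<Rightarrow> 'a::{real_normed_field, euclidean_space} ^ 2 ^ 2"
  assumes "M differentiable (at x)" and "c differentiable (at x)" and "\<And>y. det (M y) \<noteq> 0"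
  shows "(\<lambda>y. matrix_inv (M y) *v c y) differentiable (at x)"
proof -
  have "(\<lambda>y. M y $ i $ j) differentiable (at x)" "(\<lambda>y. c y $ i) differentiable (at x)" for i j
    using assms(1,2) by (simp_all add: differentiable_componentwise)
  then have "(\<lambda>y. det (M y)) differentiable (at x)"
    unfolding det_2 by (intro derivative_intros)
  with \<open>\<And>i j. (\<lambda>y. M y $ i $ j) differentiable (at x)\<close> \<open>\<And>i. (\<lambda>y. c y $ i) differentiable (at x)\<close>
  show ?thesis
    using assms(3) unfolding matrix_inv_mulv_2[OF assms(3)] differentiable_componentwise forall_2
    by (auto intro!: derivative_intros)
qed

lemma differentiable_block_eigenvector:
  fixes d :: "real \<Rightarrow> complex ^ 2 ^ 2" and c :: "real \<Rightarrow> complex ^ 2"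
  assumes "d differentiable (at x)" and "c differentiable (at x)" and "\<And>y. det (d y - mat \<Omega>) \<noteq> 0"
  shows "(\<lambda>y. block_eigenvector (d y) (c y) \<Omega>) differentiable (at x)"
proof -
  have "(\<lambda>y. matrix_inv (d y - mat \<Omega>) *v c y) differentiable (at x)"
    using assms by (intro differentiable_matrix_inv_mulv_2[where M = "\<lambda>y. d y - mat \<Omega>"]) simp_all
  then have "(\<lambda>y. block_eigenvector (d y) (c y) \<Omega> $ i) differentiable (at x)" for i
    by (cases "i = 1") (auto simp: block_eigenvector_def differentiable_componentwise)
  then show ?thesis
    by (simp add: differentiable_componentwise)
qed

lemma smooth_fun_derivative_differentiable:
  assumes "smooth_fun f" and f': "\<And>x. (f has_vector_derivative f' x) (at x)"
  shows "f' differentiable (at x)"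
proof -
  obtain d where d0: "d 0 = f" and d: "\<And>n x. (d n has_vector_derivative d (Suc n) x) (at x)"
    using assms(1) unfolding smooth_fun_def by blast
  have "f' = d 1"
    using vector_derivative_unique_at[OF f' d[of 0, unfolded d0]] by auto
  then show ?thesis
    using d[of 1] by (auto intro: differentiableI_vector)
qed

lemma has_vector_derivative_periodic:
  assumes periodic: "\<And>x. f (x + P) = f x" and f': "\<And>x. (f has_vector_derivative f' x) (at x)"
  shows "f' (x + P) = f' x"
proof -
  have "((\<lambda>y. y + P) has_vector_derivative 1) (at x)"
    by (auto simp flip: has_real_derivative_iff_has_vector_derivative intro!: derivative_eq_intros)
  then have "(f \<circ> (\<lambda>y. y + P) has_vector_derivative 1 *\<^sub>R f' (x + P)) (at x)"
    using f' by (rule vector_diff_chain_at)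
  moreover have "f \<circ> (\<lambda>y. y + P) = f"
    using periodic by (simp add: fun_eq_iff)
  ultimately show ?thesis
    using vector_derivative_unique_at[OF _ f'] by simp
qed

lemma Re_integral_eq_0:
  assumes "((\<lambda>x. Re (f x)) has_integral 0) S"
  shows "Re (integral S f) = 0"
proof (cases "f integrable_on S")
  case True
  then show ?thesis
    using has_integral_Re[OF integrable_integral] assms has_integral_unique by blast
qed (simp add: not_integrable_integral)

section \<open>Eigenvectors of a Lax operator\<close>

lemma lax_eigenvector_derivative:
  fixes T X :: "real \<Rightarrow> complex ^ 'n ^ 'n"
  assumes lax: "(T has_vector_derivative X x ** T x - T x ** X x) (at x)"
    and U': "(U has_vector_derivative U') (at x)"
    and eigen: "\<And>y. T y *v U y = \<Omega> *s U y"
  shows "T x *v (U' - X x *v U x) = \<Omega> *s (U' - X x *v U x)"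
proof -
  have "((\<lambda>y. T y *v U y) has_vector_derivative (X x ** T x - T x ** X x) *v U x + T x *v U') (at x)"
    by (rule has_vector_derivative_matrix_vector_mult[OF lax U'])
  moreover have "((\<lambda>y. T y *v U y) has_vector_derivative \<Omega> *s U') (at x)"
    using U' by (simp add: eigen has_vector_derivative_componentwise has_vector_derivative_mult_right)
  ultimately have "(X x ** T x - T x ** X x) *v U x + T x *v U' = \<Omega> *s U'"
    by (rule vector_derivative_unique_at)
  then show ?thesis
    by (simp add: matrix_vector_mult_diff_rdistrib matrix_vector_mul_assoc[symmetric] eigen
        vector_scalar_commute matrix_vector_mult_diff_distrib vector_ssub_ldistrib algebra_simps)
qed

lemma periodic_solution_has_integral_Re_zero:
  fixes U :: "real \<Rightarrow> complex ^ 'n" and X :: "real \<Rightarrow> complex ^ 'n ^ 'n"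
  assumes "0 \<le> P"
    and U': "\<And>x. (U has_vector_derivative X x *v U x + c x *s U x) (at x)"
    and skew: "\<And>x. skew_hermitian (X x)"
    and nonzero: "\<And>x. U x \<noteq> 0"
    and periodic: "U P = U 0"
  shows "((\<lambda>x. Re (c x)) has_integral 0) {0..P}"
proof -
  have norm2': "((\<lambda>y. (norm (U y))\<^sup>2) has_real_derivative 2 * Re (c x) * (norm (U x))\<^sup>2) (at x)" for x
  proof -
    define V where "V = X x *v U x + c x *s U x"
    have "((\<lambda>y. inner (U y) (U y)) has_derivative (\<lambda>h. inner (U x) (h *\<^sub>R V) + inner (h *\<^sub>R V) (U x))) (at x)"
      using U'[of x] unfolding has_vector_derivative_def V_def by (intro has_derivative_inner)
    moreover have "inner (U x) V = Re (c x) * (norm (U x))\<^sup>2"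
      by (simp add: V_def inner_add_right inner_mulv_skew_hermitian[OF skew] inner_vector_scalar_mult_self)
    then have "(\<lambda>h. inner (U x) (h *\<^sub>R V) + inner (h *\<^sub>R V) (U x)) = (*) (2 * Re (c x) * (norm (U x))\<^sup>2)"
      by (simp add: fun_eq_iff inner_commute[of V] algebra_simps)
    ultimately show ?thesis
      by (simp add: has_field_derivative_def power2_norm_eq_inner)
  qed
  have log': "((\<lambda>y. ln ((norm (U y))\<^sup>2)) has_real_derivative 2 * Re (c x)) (at x)" for x
  proof -
    have "((\<lambda>y. ln ((norm (U y))\<^sup>2)) has_real_derivative
        inverse ((norm (U x))\<^sup>2) * (2 * Re (c x) * (norm (U x))\<^sup>2)) (at x)"
      using nonzero[of x] by (intro DERIV_chain2[OF DERIV_ln norm2']) simp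
    moreover have "inverse ((norm (U x))\<^sup>2) * (2 * Re (c x) * (norm (U x))\<^sup>2) = 2 * Re (c x)"
      using nonzero[of x] by (simp add: field_simps)
    ultimately show ?thesis by simp
  qed
  have "((\<lambda>x. 2 * Re (c x)) has_integral ln ((norm (U P))\<^sup>2) - ln ((norm (U 0))\<^sup>2)) {0..P}"
    using assms(1) log' by (intro fundamental_theorem_of_calculus)
      (auto simp: has_real_derivative_iff_has_vector_derivative[symmetric] intro: has_field_derivative_at_within)
  then have "((\<lambda>x. 1/2 * (2 * Re (c x))) has_integral 1/2 * 0) {0..P}"
    unfolding periodic diff_self by (rule has_integral_mult_right)
  then show ?thesis by simp
qed

lemma lax_eigenvector_has_integral_Re_zero:
  fixes T X :: "real \<Rightarrow> complex ^ 'n ^ 'n" and U :: "real \<Rightarrow> complex ^ 'n"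
  assumes "0 \<le> P"
    and lax: "\<And>x. (T has_vector_derivative X x ** T x - T x ** X x) (at x)"
    and skew: "\<And>x. skew_hermitian (X x)"
    and U_diff: "\<And>x. U differentiable (at x)"
    and eigen: "\<And>x. T x *v U x = \<Omega> *s U x"
    and simple: "\<And>x v. T x *v v = \<Omega> *s v \<Longrightarrow> v = v $ k *s U x"
    and normalized: "\<And>x. U x $ k = 1"
    and periodic: "U P = U 0"
  shows "((\<lambda>x. Re ((X x *v U x) $ k)) has_integral 0) {0..P}"
proof -
  define U' where "U' x = vector_derivative U (at x)" for x
  have U': "(U has_vector_derivative U' x) (at x)" for x
    using U_diff by (simp add: U'_def vector_derivative_works[symmetric])
  have "((\<lambda>y. U y $ k) has_vector_derivative U' x $ k) (at x)" for x
    using U' by (simp add: has_vector_derivative_componentwise)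
  then have "((\<lambda>y. 1) has_vector_derivative U' x $ k) (at x)" for x
    by (simp add: normalized)
  then have U'_k: "U' x $ k = 0" for x
    by (rule vector_derivative_unique_at[OF _ has_vector_derivative_const])
  have "U' x - X x *v U x = (U' x - X x *v U x) $ k *s U x" for x
    by (intro simple lax_eigenvector_derivative[OF lax U'] eigen)
  then have "U' x = X x *v U x + (- (X x *v U x) $ k) *s U x" for x
    by (simp add: U'_k vec_eq_iff algebra_simps)
  then have "(U has_vector_derivative X x *v U x + (- (X x *v U x) $ k) *s U x) (at x)" for x
    using U' by metis
  moreover have "U x \<noteq> 0" for x
    using normalized by (metis zero_index zero_neq_one)
  ultimately have "((\<lambda>x. Re (- (X x *v U x) $ k)) has_integral 0) {0..P}"
    by (rule periodic_solution_has_integral_Re_zero[OF \<open>0 \<le> P\<close> _ skew _ periodic])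
  from has_integral_neg[OF this] show ?thesis
    by simp
qed

lemma lax_blockmat_has_integral_Re_zero:
  fixes T X :: "real \<Rightarrow> complex ^ 3 ^ 3" and d :: "real \<Rightarrow> complex ^ 2 ^ 2" and c :: "real \<Rightarrow> complex ^ 2"
  assumes "0 \<le> P"
    and T_eq: "\<And>x. T x = blockmat (a x) (b x) (c x) (d x)"
    and X_eq: "\<And>x. X x = blockmat (\<alpha> x) (\<beta> x) (\<gamma> x) (\<rho> x)"
    and lax: "\<And>x. (T has_vector_derivative X x ** T x - T x ** X x) (at x)"
    and skew: "\<And>x. skew_hermitian (X x)"
    and c_diff: "\<And>x. c differentiable (at x)" and d_diff: "\<And>x. d differentiable (at x)"
    and c_periodic: "c P = c 0" and d_periodic: "d P = d 0"
    and eigenvalue: "\<And>x. is_eigenvalue (T x) \<Omega>"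
    and nonsingular: "\<And>x. det (d x - mat \<Omega>) \<noteq> 0"
  shows "((\<lambda>x. Re (\<alpha> x - (\<Sum>j\<in>UNIV. \<beta> x $ j * (matrix_inv (d x - mat \<Omega>) *v c x) $ j)))
    has_integral 0) {0..P}"
proof -
  define U where "U x = block_eigenvector (d x) (c x) \<Omega>" for x
  have "((\<lambda>x. Re ((X x *v U x) $ 1)) has_integral 0) {0..P}"
  proof (rule lax_eigenvector_has_integral_Re_zero[OF \<open>0 \<le> P\<close> lax skew])
    show "U differentiable (at x)" for x
      unfolding U_def using d_diff c_diff nonsingular by (rule differentiable_block_eigenvector)
    show "T x *v U x = \<Omega> *s U x" for x
      using eigenvalue[of x] nonsingular[of x] unfolding U_def T_eq
      by (rule blockmat_mulv_block_eigenvector)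
    show "v = v $ 1 *s U x" if "T x *v v = \<Omega> *s v" for x v
      using nonsingular[of x] that unfolding U_def T_eq by (rule blockmat_eigenvector_eq)
  qed (simp_all add: U_def c_periodic d_periodic)
  then show ?thesis
    by (simp add: U_def X_eq blockmat_mulv_block_eigenvector_1)
qed

theorem mainTheorem5:
  fixes P \<zeta> :: real and q qx :: "real \<Rightarrow> complex ^ 2"
    and X T :: "real \<Rightarrow> complex ^ 3 ^ 3" and D :: "real \<Rightarrow> complex ^ 2 ^ 2"
    and C :: "real \<Rightarrow> complex ^ 2"
  assumes P_pos: "P > 0"
    and q_smooth: "smooth_fun q"
    and q_periodic: "\<And>x. q (x + P) = q x"
    and qx_def: "\<And>x. (q has_vector_derivative qx x) (at x)"
    and C_def: "C = (\<lambda>x. (- 2 * complex_of_real \<zeta>) *s vconj (q x) + \<i> *s vconj (qx x))"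
    and D_def: "D = (\<lambda>x. mat (2 * \<i> * complex_of_real \<zeta> ^ 2) - outer (\<i> *s vconj (q x)) (q x))"
    and X_def: "X = (\<lambda>x. blockmat (- \<i> * complex_of_real \<zeta>) (q x) (- vconj (q x))
                          (mat (\<i> * complex_of_real \<zeta>)))"
    and T_def: "T = (\<lambda>x. blockmat (- 2 * \<i> * complex_of_real \<zeta> ^ 2 + \<i> * (\<Sum>j\<in>UNIV. q x $ j * cnj (q x $ j)))
                          ((2 * complex_of_real \<zeta>) *s q x + \<i> *s qx x) (C x) (D x))"
    and lax: "\<And>x. (T has_vector_derivative (X x ** T x - T x ** X x)) (at x)"
  shows "(\<forall>x. skew_hermitian (T x))
       \<and> (\<forall>x \<Omega>. is_eigenvalue (T x) \<Omega> \<longrightarrow> Re \<Omega> = 0)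
       \<and> (\<forall>\<Omega>. (\<forall>x. is_eigenvalue (T x) \<Omega>) \<longrightarrow> (\<forall>x. det (D x - mat \<Omega>) \<noteq> 0) \<longrightarrow>
            Re (integral {0..P} (\<lambda>x. \<Sum>j\<in>UNIV. q x $ j * (matrix_inv (D x - mat \<Omega>) *v C x) $ j)) = 0)"
proof -
  have skew_T: "skew_hermitian (T x)" for x
    unfolding T_def C_def D_def
    by (rule skew_hermitian_blockmat)
       (auto simp: sum_2 vconj_def vec_eq_iff skew_hermitian_def adjoint_mat_def mat_def outer_def forall_2)
  have skew_X: "skew_hermitian (X x)" for x
    unfolding X_def
    by (rule skew_hermitian_blockmat) (auto simp: skew_hermitian_def adjoint_mat_def mat_def vec_eq_iff)
  have "Re (integral {0..P} (\<lambda>x. \<Sum>j\<in>UNIV. q x $ j * (matrix_inv (D x - mat \<Omega>) *v C x) $ j)) = 0"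
    if "\<forall>x. is_eigenvalue (T x) \<Omega>" and "\<forall>x. det (D x - mat \<Omega>) \<noteq> 0" for \<Omega>
  proof (rule Re_integral_eq_0)
    have "(\<lambda>y. q y $ i) differentiable (at x)" "(\<lambda>y. qx y $ i) differentiable (at x)" for x i
      using differentiableI_vector[OF qx_def] smooth_fun_derivative_differentiable[OF q_smooth qx_def]
      by (simp_all add: differentiable_componentwise)
    then have "C differentiable (at x)" "D differentiable (at x)" for x
      unfolding C_def D_def differentiable_componentwise
      by (auto simp: vconj_def mat_def outer_def differentiable_cnj_iff intro!: derivative_intros)
    moreover have "C P = C 0" "D P = D 0"
      using q_periodic[of 0] has_vector_derivative_periodic[OF q_periodic qx_def, of 0]
      by (simp_all add: C_def D_def)
    ultimately have "((\<lambda>x. Re (- \<i> * complex_of_real \<zeta>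
        - (\<Sum>j\<in>UNIV. q x $ j * (matrix_inv (D x - mat \<Omega>) *v C x) $ j))) has_integral 0) {0..P}"
      using P_pos that X_def T_def lax skew_X
      by (intro lax_blockmat_has_integral_Re_zero[where T = T and X = X]) auto
    from has_integral_neg[OF this]
    show "((\<lambda>x. Re (\<Sum>j\<in>UNIV. q x $ j * (matrix_inv (D x - mat \<Omega>) *v C x) $ j)) has_integral 0) {0..P}"
      by simp
  qed
  then show ?thesis
    using skew_T skew_hermitian_eigenvalue_Re by blast
qed

end
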